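(* Let $N,K\ge1$ and $T\ge1$. Let $\phi_r\in\mathbb{R}$, $\sigma_r^2>0$. For $t=1,\dots,T$ independently, let $\theta_t\sim\mathcal{N}(\phi_r,\sigma_r^2)$, and conditionally on $\theta_t$ let $x_{t,1},\dots,x_{t,N}$ and $y_{t,1},\dots,y_{t,K}$ be independent $\mathcal{N}(\theta_t,1)$ random variables. Define for $\phi\in\mathbb{R}$, $\sigma^2>0$, $$\ell_t^{\mathrm{tr}}(\theta_t,\phi,\sigma^2)=\tfrac12\log\sigma^2+\frac{(\theta_t-\phi)^2}{2\sigma^2}+\tfrac12\sum_{n=1}^N(x_{t,n}-\theta_t)^2,$$ $\hat\theta_t(\phi,\sigma^2)=\arg\min_{\theta_t}\ell_t^{\mathrm{tr}}(\theta_t,\phi,\sigma^2)$, and $$\hat\ell_{\mathrm{PLL}}(\phi,\sigma^2)=\tfrac12\sum_{t=1}^T\sum_{k=1}^K\big(y_{t,k}-\hat\theta_t(\phi,\sigma^2)\big)^2.$$ Let $(\hat\phi,\hat\sigma^2)$ be the solution of $\nabla_{(\phi,\sigma^2)}\hat\ell_{\mathrm{PLL}}(\phi,\sigma^2)=0$. Then, as $T\to\infty$, $\hat\phi(\hat\sigma^2)\to\phi_r$ and $\hat\sigma^2\to\sigma_r^2$ in probability.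
   Context: This is a univariate hierarchical normal model with one module; $\hat\ell_{\mathrm{PLL}}$ is (up to a constant) the negative validation log-likelihood evaluated at the MAP task parameters, and $(\hat\phi,\hat\sigma^2)$ are the stationary points of it with respect to the meta-parameters. *)

theory Defs
  imports "HOL-Probability.Probability"
begin

text \<open>Index type for the independent primitive random variables:
  task parameters theta_t, training noises for x_{t,n}, validation noises for y_{t,k}.\<close>
datatype idx = Th nat | Ex nat nat | Ey nat nat

text \<open>Training loss of task t (data xs = x_{t,0..N-1}), meta-parameters phi and s = sigma^2.\<close>
definition ell_tr :: "nat \<Rightarrow> (nat \<Rightarrow> real) \<Rightarrow> real \<Rightarrow> real \<Rightarrow> real \<Rightarrow> real" where
  "ell_tr N xs \<theta> \<phi> s =
     ln s / 2 + (\<theta> - \<phi>)\<^sup>2 / (2 * s) + (\<Sum>n<N. (xs n - \<theta>)\<^sup>2) / 2"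

definition theta_hat :: "nat \<Rightarrow> (nat \<Rightarrow> real) \<Rightarrow> real \<Rightarrow> real \<Rightarrow> real" where
  "theta_hat N xs \<phi> s = (ARG_MIN (\<lambda>\<theta>. ell_tr N xs \<theta> \<phi> s) \<theta>. True)"

definition ell_PLL :: "nat \<Rightarrow> nat \<Rightarrow> nat \<Rightarrow> (nat \<Rightarrow> nat \<Rightarrow> real) \<Rightarrow> (nat \<Rightarrow> nat \<Rightarrow> real)
    \<Rightarrow> real \<Rightarrow> real \<Rightarrow> real" where
  "ell_PLL N K T xd yd \<phi> s =
     (\<Sum>t<T. \<Sum>k<K. (yd t k - theta_hat N (xd t) \<phi> s)\<^sup>2) / 2"

definition PLL_stationary :: "nat \<Rightarrow> nat \<Rightarrow> nat \<Rightarrow> (nat \<Rightarrow> nat \<Rightarrow> real) \<Rightarrow> (nat \<Rightarrow> nat \<Rightarrow> real)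
    \<Rightarrow> real \<Rightarrow> real \<Rightarrow> bool" where
  "PLL_stationary N K T xd yd \<phi> s \<longleftrightarrow>
     s > 0 \<and>
     ((\<lambda>p. ell_PLL N K T xd yd (fst p) (snd p)) has_derivative (\<lambda>h. 0)) (at (\<phi>, s))"

end

theory Submission
  imports Defs
begin

text \<open>
  For \<open>s = \<sigma>\<^sup>2 > 0\<close> the training loss of task \<open>t\<close> is a parabola in \<open>\<theta>\<close>, so the MAP estimate is
  \<open>(1 - w) \<phi> + w a\<^sub>t\<close>, where \<open>a\<^sub>t\<close> is the mean of the training data of the task and
  \<open>w = sN / (1 + sN) \<in> (0, 1)\<close>.
  The validation loss is therefore a least-squares fit of the validation means \<open>b\<^sub>t\<close> by the affine
  function \<open>(1 - w) \<phi> + w a\<^sub>t\<close>, and its stationary points are the normal equations of the regression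
  of \<open>b\<close> on \<open>a\<close>: \<open>w\<close> is the empirical slope \<open>Cov(a, b) / Var(a)\<close>, \<open>(1 - w) \<phi>\<close> the intercept.
  Whenever the empirical slope lies in \<open>(0, 1)\<close> this determines \<open>(\<phi>, s)\<close> uniquely as a continuous
  function of the four empirical moments of the pairs \<open>(a\<^sub>t, b\<^sub>t)\<close>. These pairs are independent across
  tasks with bounded fourth moments, so by Chebyshev's weak law the moments converge in probability to
  their population values, at which the slope is \<open>\<sigma>\<^sub>r\<^sup>2 / (\<sigma>\<^sub>r\<^sup>2 + 1/N) \<in> (0, 1)\<close> and the
  estimators evaluate to \<open>\<phi>\<^sub>r\<close> and \<open>\<sigma>\<^sub>r\<^sup>2\<close>.
\<close>

section \<open>Stationary points of the validation loss\<close>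

definition sample_mean :: "nat \<Rightarrow> (nat \<Rightarrow> real) \<Rightarrow> real" where
  "sample_mean n f = (\<Sum>i<n. f i) / real n"

lemma arg_min_eq_vertex:
  fixes f :: "real \<Rightarrow> real"
  assumes "a > 0" and "\<And>\<theta>. f \<theta> = f c + a * (\<theta> - c)\<^sup>2"
  shows "(ARG_MIN f \<theta>. True) = c"
proof (rule arg_minI[where Q = "\<lambda>\<theta>. \<theta> = c"])
  show "\<not> f \<theta> < f c" for \<theta>
    using assms by (metis add_le_same_cancel1 not_le zero_le_mult_iff zero_le_power2 less_le)
  show "\<theta> = c" if "\<forall>\<theta>'. True \<longrightarrow> \<not> f \<theta>' < f \<theta>" for \<theta>
    using that assms(2)[of \<theta>] assms(1) by (smt (verit) mult_pos_pos zero_less_power2)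
qed simp

lemma theta_hat_closed_form:
  assumes s: "s > 0"
  shows "theta_hat N xs \<phi> s = (\<phi> + s * (\<Sum>n<N. xs n)) / (1 + s * real N)"
proof -
  define S where "S = (\<Sum>n<N. xs n)"
  define c where "c = (\<phi> + s * S) / (1 + s * real N)"
  have d: "1 + s * real N > 0" using s by (simp add: add_pos_nonneg)
  have c_eq: "\<phi> + s * S = (1 + s * real N) * c" unfolding c_def using d by simp
  have vertex_form: "ell_tr N xs \<theta> \<phi> s = ell_tr N xs c \<phi> s + (1 + s * real N) / (2 * s) * (\<theta> - c)\<^sup>2" for \<theta>
  proof -
    have sum_sq_diff: "(\<Sum>n<N. (xs n - \<theta>)\<^sup>2) - (\<Sum>n<N. (xs n - c)\<^sup>2) = (\<theta> - c) * (real N * (\<theta> + c) - 2 * S)"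
      unfolding S_def sum_subtractf[symmetric]
      by (simp add: power2_eq_square algebra_simps sum.distrib sum_subtractf sum_distrib_left)
    have "ell_tr N xs \<theta> \<phi> s - ell_tr N xs c \<phi> s =
        ((\<theta> - \<phi>)\<^sup>2 - (c - \<phi>)\<^sup>2 + s * ((\<Sum>n<N. (xs n - \<theta>)\<^sup>2) - (\<Sum>n<N. (xs n - c)\<^sup>2))) / (2 * s)"
      unfolding ell_tr_def using s by (simp add: field_simps)
    also have "\<dots> = (\<theta> - c) * ((1 + s * real N) * (\<theta> + c) - 2 * (\<phi> + s * S)) / (2 * s)"
      unfolding sum_sq_diff by (simp add: power2_eq_square algebra_simps)
    also have "\<dots> = (1 + s * real N) / (2 * s) * (\<theta> - c)\<^sup>2"
    proof -
      have ring: "(\<theta> - c) * ((1 + s * real N) * (\<theta> + c) - 2 * ((1 + s * real N) * c)) = (1 + s * real N) * (\<theta> - c)\<^sup>2"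
        unfolding power2_eq_square by algebra
      show ?thesis unfolding c_eq ring by simp
    qed
    finally show ?thesis by simp
  qed
  show ?thesis
    unfolding theta_hat_def S_def[symmetric] c_def[symmetric]
    by (rule arg_min_eq_vertex[OF _ vertex_form]) (use s d in simp)
qed

lemma has_derivative_MAP_formula:
  assumes d: "1 + s * real N \<noteq> 0"
  shows "((\<lambda>p. (fst p + snd p * S) / (1 + snd p * real N)) has_derivative
     (\<lambda>h. fst h / (1 + s * real N) + snd h * (S - real N * \<phi>) / (1 + s * real N)\<^sup>2)) (at (\<phi>, s))"
proof -
  have num: "((\<lambda>p. fst p + snd p * S) has_derivative (\<lambda>h. fst h + snd h * S)) (at (\<phi>, s))"
    by (intro has_derivative_add has_derivative_fst has_derivative_snd has_derivative_ident
        has_derivative_mult_left)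
  have den: "((\<lambda>p. 1 + snd p * real N) has_derivative (\<lambda>h. 0 + snd h * real N)) (at (\<phi>, s))"
    by (intro has_derivative_add has_derivative_const has_derivative_snd has_derivative_ident
        has_derivative_mult_left)
  have "(fst h + snd h * S) * (1 + s * real N) - (\<phi> + s * S) * (0 + snd h * real N) =
      fst h * (1 + s * real N) + snd h * (S - real N * \<phi>)" for h :: "real \<times> real"
    by (simp add: algebra_simps)
  then show ?thesis
    using has_derivative_divide'[OF num den] d by (simp add: power2_eq_square add_divide_distrib)
qed

lemma has_derivative_ell_PLL:
  fixes xd yd :: "nat \<Rightarrow> nat \<Rightarrow> real" and N K :: nat and \<phi> s :: real
  assumes s: "s > 0"
  defines "r t \<equiv> (\<Sum>k<K. yd t k - theta_hat N (xd t) \<phi> s)"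
    and "G t h \<equiv> fst h / (1 + s * real N) + snd h * ((\<Sum>n<N. xd t n) - real N * \<phi>) / (1 + s * real N)\<^sup>2"
  shows "((\<lambda>p. ell_PLL N K T xd yd (fst p) (snd p)) has_derivative (\<lambda>h. - (\<Sum>t<T. r t * G t h))) (at (\<phi>, s))"
proof -
  define g where "g t p = (fst p + snd p * (\<Sum>n<N. xd t n)) / (1 + snd p * real N)" for t and p :: "real \<times> real"
  have g_at: "g t (\<phi>, s) = theta_hat N (xd t) \<phi> s" for t
    unfolding g_def using theta_hat_closed_form[OF s] by simp
  have "1 + s * real N > 0" using s by (simp add: add_pos_nonneg)
  then have g_deriv: "(g t has_derivative G t) (at (\<phi>, s))" for t
    unfolding g_def G_def by (intro has_derivative_MAP_formula) simp
  have "((\<lambda>p. (\<Sum>t<T. \<Sum>k<K. (yd t k - g t p)\<^sup>2) / 2) has_derivative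
      (\<lambda>h. (\<Sum>t<T. \<Sum>k<K. of_nat 2 * (0 - G t h) * (yd t k - g t (\<phi>, s)) ^ (2 - 1)) / 2)) (at (\<phi>, s))"
    by (intro bounded_linear.has_derivative[OF bounded_linear_divide] has_derivative_sum
        has_derivative_power has_derivative_diff has_derivative_const g_deriv)
  moreover have "(\<Sum>t<T. \<Sum>k<K. of_nat 2 * (0 - G t h) * (yd t k - g t (\<phi>, s)) ^ (2 - 1)) / 2
      = - (\<Sum>t<T. r t * G t h)" for h
    unfolding r_def g_at sum_distrib_right sum_divide_distrib sum_negf[symmetric]
    by (intro sum.cong refl) simp
  ultimately have "((\<lambda>p. (\<Sum>t<T. \<Sum>k<K. (yd t k - g t p)\<^sup>2) / 2) has_derivative
      (\<lambda>h. - (\<Sum>t<T. r t * G t h))) (at (\<phi>, s))"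
    by simp
  then show ?thesis
  proof (rule has_derivative_transform_within_open[where s = "{p. snd p > 0}"])
    show "open {p :: real \<times> real. snd p > 0}"
      by (intro open_Collect_less continuous_intros)
  qed (use s in \<open>auto simp: ell_PLL_def g_def theta_hat_closed_form\<close>)
qed

lemma PLL_stationary_iff_score_equations:
  fixes xd yd :: "nat \<Rightarrow> nat \<Rightarrow> real" and N K :: nat and \<phi> s :: real
  assumes s: "s > 0"
  defines "r t \<equiv> (\<Sum>k<K. yd t k - theta_hat N (xd t) \<phi> s)"
  shows "PLL_stationary N K T xd yd \<phi> s \<longleftrightarrow>
    (\<Sum>t<T. r t) = 0 \<and> (\<Sum>t<T. r t * ((\<Sum>n<N. xd t n) - real N * \<phi>)) = 0"
proof -
  define d where "d = 1 + s * real N"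
  define S where "S t = (\<Sum>n<N. xd t n)" for t
  define G where "G t h = fst h / d + snd h * (S t - real N * \<phi>) / d\<^sup>2" for t and h :: "real \<times> real"
  have d: "d > 0" unfolding d_def using s by (simp add: add_pos_nonneg)
  have D: "((\<lambda>p. ell_PLL N K T xd yd (fst p) (snd p)) has_derivative
      (\<lambda>h. - (\<Sum>t<T. r t * G t h))) (at (\<phi>, s))"
    using has_derivative_ell_PLL[OF s] unfolding r_def G_def S_def d_def .
  have linear: "(\<Sum>t<T. r t * G t h) =
      fst h / d * (\<Sum>t<T. r t) + snd h / d\<^sup>2 * (\<Sum>t<T. r t * (S t - real N * \<phi>))" for h
    by (simp add: G_def sum.distrib sum_distrib_left sum_divide_distrib distrib_left mult_ac)
  have "PLL_stationary N K T xd yd \<phi> s \<longleftrightarrow> (\<lambda>h. - (\<Sum>t<T. r t * G t h)) = (\<lambda>h. 0)"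
  proof
    assume "PLL_stationary N K T xd yd \<phi> s"
    then show "(\<lambda>h. - (\<Sum>t<T. r t * G t h)) = (\<lambda>h. 0)"
      unfolding PLL_stationary_def by (blast intro: has_derivative_unique[OF D])
  qed (use s D in \<open>simp add: PLL_stationary_def\<close>)
  also have "\<dots> \<longleftrightarrow> (\<Sum>t<T. r t) = 0 \<and> (\<Sum>t<T. r t * (S t - real N * \<phi>)) = 0"
  proof
    assume "(\<lambda>h. - (\<Sum>t<T. r t * G t h)) = (\<lambda>h. 0)"
    from fun_cong[OF this, of "(1, 0)"] fun_cong[OF this, of "(0, 1)"]
    show "(\<Sum>t<T. r t) = 0 \<and> (\<Sum>t<T. r t * (S t - real N * \<phi>)) = 0"
      using d unfolding linear by simp
  qed (simp add: linear)
  finally show ?thesis unfolding S_def .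
qed

lemma PLL_stationary_iff_moment_equations:
  fixes xd yd :: "nat \<Rightarrow> nat \<Rightarrow> real" and N K T :: nat and \<phi> s :: real
  assumes N: "N \<ge> 1" and K: "K \<ge> 1" and T: "T > 0" and s: "s > 0"
  defines "w \<equiv> s * real N / (1 + s * real N)"
    and "a t \<equiv> sample_mean N (xd t)" and "b t \<equiv> sample_mean K (yd t)"
  shows "PLL_stationary N K T xd yd \<phi> s \<longleftrightarrow>
    sample_mean T b = (1 - w) * \<phi> + w * sample_mean T a \<and>
    sample_mean T (\<lambda>t. a t * b t) = (1 - w) * \<phi> * sample_mean T a + w * sample_mean T (\<lambda>t. (a t)\<^sup>2)"
proof -
  have d: "1 + s * real N > 0" using s by (simp add: add_pos_nonneg)
  have one_minus_w: "1 - w = 1 / (1 + s * real N)"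
    unfolding w_def using d by (simp add: field_simps)
  have theta_hat_a: "theta_hat N (xd t) \<phi> s = (1 - w) * \<phi> + w * a t" for t
  proof -
    have "w * a t = s * (\<Sum>n<N. xd t n) / (1 + s * real N)"
      unfolding w_def a_def sample_mean_def using N by simp
    then show ?thesis
      unfolding theta_hat_closed_form[OF s] one_minus_w by (simp add: add_divide_distrib)
  qed
  have residual_sum: "(\<Sum>k<K. yd t k - theta_hat N (xd t) \<phi> s) = real K * (b t - ((1 - w) * \<phi> + w * a t))" for t
    unfolding theta_hat_a b_def sample_mean_def using K by (simp add: sum_subtractf sum.distrib algebra_simps)
  have centered_sum: "(\<Sum>n<N. xd t n) - real N * \<phi> = real N * (a t - \<phi>)" for t
    unfolding a_def sample_mean_def using N by (simp add: algebra_simps)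
  have first_score: "(\<Sum>t<T. real K * (b t - ((1 - w) * \<phi> + w * a t))) =
      real K * real T * (sample_mean T b - ((1 - w) * \<phi> + w * sample_mean T a))"
    using T unfolding sample_mean_def
    by (simp add: sum_distrib_left[symmetric] sum_subtractf sum.distrib field_simps)
  have second_score: "(\<Sum>t<T. real K * (b t - ((1 - w) * \<phi> + w * a t)) * (real N * (a t - \<phi>))) =
      real K * real N * real T *
        ((sample_mean T (\<lambda>t. a t * b t) - ((1 - w) * \<phi> * sample_mean T a + w * sample_mean T (\<lambda>t. (a t)\<^sup>2)))
         - \<phi> * (sample_mean T b - ((1 - w) * \<phi> + w * sample_mean T a)))"
    using T unfolding sample_mean_def
    by (simp add: sum_distrib_left[symmetric] sum_subtractf sum.distrib power2_eq_square field_simps flip: sum_distrib_right)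
  show ?thesis
    unfolding PLL_stationary_iff_score_equations[OF s] residual_sum centered_sum first_score second_score
    using N K T by auto
qed

definition sample_moments ::
    "nat \<Rightarrow> nat \<Rightarrow> nat \<Rightarrow> (nat \<Rightarrow> nat \<Rightarrow> real) \<Rightarrow> (nat \<Rightarrow> nat \<Rightarrow> real) \<Rightarrow>
      real \<times> real \<times> real \<times> real" where
  "sample_moments N K T xd yd =
     (let a = (\<lambda>t. sample_mean N (xd t)); b = (\<lambda>t. sample_mean K (yd t))
      in (sample_mean T a, sample_mean T b, sample_mean T (\<lambda>t. (a t)\<^sup>2), sample_mean T (\<lambda>t. a t * b t)))"

definition moment_variance :: "real \<times> real \<times> real \<times> real \<Rightarrow> real" where
  "moment_variance m = (case m of (A, B, Saa, Sab) \<Rightarrow> Saa - A\<^sup>2)"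

definition regression_slope :: "real \<times> real \<times> real \<times> real \<Rightarrow> real" where
  "regression_slope m = (case m of (A, B, Saa, Sab) \<Rightarrow> (Sab - A * B) / (Saa - A\<^sup>2))"

definition phi_of_moments :: "real \<times> real \<times> real \<times> real \<Rightarrow> real" where
  "phi_of_moments m = (case m of (A, B, Saa, Sab) \<Rightarrow> (B - regression_slope m * A) / (1 - regression_slope m))"

definition sigma2_of_moments :: "nat \<Rightarrow> real \<times> real \<times> real \<times> real \<Rightarrow> real" where
  "sigma2_of_moments N m = regression_slope m / (real N * (1 - regression_slope m))"

definition moments_admissible :: "real \<times> real \<times> real \<times> real \<Rightarrow> bool" where
  "moments_admissible m \<longleftrightarrow> moment_variance m > 0 \<and> 0 < regression_slope m \<and> regression_slope m < 1"

lemma regression_normal_equations_iff: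
  fixes A B Saa Sab w \<phi> :: real
  assumes var: "Saa - A\<^sup>2 > 0" and w: "w \<noteq> 1"
  shows "(B = (1 - w) * \<phi> + w * A \<and> Sab = (1 - w) * \<phi> * A + w * Saa) \<longleftrightarrow>
    w = (Sab - A * B) / (Saa - A\<^sup>2) \<and> \<phi> = (B - w * A) / (1 - w)"
proof -
  have "Sab = (1 - w) * \<phi> * A + w * Saa \<longleftrightarrow> Sab - A * B = w * (Saa - A\<^sup>2)"
    if intercept: "(1 - w) * \<phi> = B - w * A"
  proof -
    have "(1 - w) * \<phi> * A = (B - w * A) * A" by (simp only: intercept)
    then show ?thesis by (auto simp: algebra_simps power2_eq_square)
  qed
  moreover have "B = (1 - w) * \<phi> + w * A \<longleftrightarrow> \<phi> = (B - w * A) / (1 - w)"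
    using w by (auto simp: field_simps)
  moreover have "Sab - A * B = w * (Saa - A\<^sup>2) \<longleftrightarrow> w = (Sab - A * B) / (Saa - A\<^sup>2)"
    using var by (auto simp: field_simps)
  ultimately show ?thesis by (auto simp: algebra_simps)
qed

lemma shrinkage_weight_iff:
  assumes N: "N \<ge> 1" and w: "0 < w" "w < 1"
  shows "s > 0 \<and> s * real N / (1 + s * real N) = w \<longleftrightarrow> s = w / (real N * (1 - w))"
proof
  assume "s > 0 \<and> s * real N / (1 + s * real N) = w"
  then have d: "1 + s * real N > 0" and w_eq: "w = s * real N / (1 + s * real N)"
    by (auto simp: add_pos_nonneg)
  from w_eq d have "w * (1 + s * real N) = s * real N" by simp
  then have "s * real N * (1 - w) = w"
    by (simp add: algebra_simps)
  then show "s = w / (real N * (1 - w))"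
    using N w by (simp add: field_simps)
next
  assume s: "s = w / (real N * (1 - w))"
  then have sN: "s * real N = w / (1 - w)" using N by simp
  have "s > 0" unfolding s using N w by simp
  moreover have "s * real N / (1 + s * real N) = w" unfolding sN using w by (simp add: field_simps)
  ultimately show "s > 0 \<and> s * real N / (1 + s * real N) = w" ..
qed

lemma PLL_stationary_iff_moment_estimator:
  fixes xd yd :: "nat \<Rightarrow> nat \<Rightarrow> real"
  assumes N: "N \<ge> 1" and K: "K \<ge> 1" and T: "T > 0"
    and admissible: "moments_admissible (sample_moments N K T xd yd)"
  shows "PLL_stationary N K T xd yd \<phi> s \<longleftrightarrow>
    \<phi> = phi_of_moments (sample_moments N K T xd yd) \<and> s = sigma2_of_moments N (sample_moments N K T xd yd)"
proof -
  obtain A B Saa Sab where m: "sample_moments N K T xd yd = (A, B, Saa, Sab)"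
    by (cases "sample_moments N K T xd yd") auto
  then have moments: "A = sample_mean T (\<lambda>t. sample_mean N (xd t))" "B = sample_mean T (\<lambda>t. sample_mean K (yd t))"
    "Saa = sample_mean T (\<lambda>t. (sample_mean N (xd t))\<^sup>2)"
    "Sab = sample_mean T (\<lambda>t. sample_mean N (xd t) * sample_mean K (yd t))"
    unfolding sample_moments_def Let_def by simp_all
  define w0 where "w0 = (Sab - A * B) / (Saa - A\<^sup>2)"
  have w0: "regression_slope (A, B, Saa, Sab) = w0" unfolding regression_slope_def w0_def by simp
  have var: "Saa - A\<^sup>2 > 0" and slope: "0 < w0" "w0 < 1"
    using admissible unfolding moments_admissible_def m moment_variance_def w0 by simp_all
  have "PLL_stationary N K T xd yd \<phi> s \<longleftrightarrow>
      s > 0 \<and> s * real N / (1 + s * real N) = w0 \<and> \<phi> = (B - w0 * A) / (1 - w0)"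
  proof (cases "s > 0")
    case True
    define w where "w = s * real N / (1 + s * real N)"
    have "w \<noteq> 1" unfolding w_def using True by (simp add: add_pos_nonneg)
    have "PLL_stationary N K T xd yd \<phi> s \<longleftrightarrow>
        B = (1 - w) * \<phi> + w * A \<and> Sab = (1 - w) * \<phi> * A + w * Saa"
      unfolding PLL_stationary_iff_moment_equations[OF N K T True] moments w_def ..
    also have "\<dots> \<longleftrightarrow> w = w0 \<and> \<phi> = (B - w * A) / (1 - w)"
      unfolding w0_def by (rule regression_normal_equations_iff[OF var \<open>w \<noteq> 1\<close>])
    finally show ?thesis using True unfolding w_def by auto
  qed (simp add: PLL_stationary_def)
  also have "\<dots> \<longleftrightarrow> s = w0 / (real N * (1 - w0)) \<and> \<phi> = (B - w0 * A) / (1 - w0)"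
    using shrinkage_weight_iff[OF N slope] by blast
  finally show ?thesis
    unfolding m phi_of_moments_def sigma2_of_moments_def w0 by auto
qed

lemma stationary_point_eq_moment_estimator:
  fixes xd yd :: "nat \<Rightarrow> nat \<Rightarrow> real"
  assumes "N \<ge> 1" and "K \<ge> 1" and "T > 0"
    and "moments_admissible (sample_moments N K T xd yd)"
    and "(\<exists>\<phi> s. PLL_stationary N K T xd yd \<phi> s) \<Longrightarrow> PLL_stationary N K T xd yd \<phi>' s'"
  shows "\<phi>' = phi_of_moments (sample_moments N K T xd yd) \<and> s' = sigma2_of_moments N (sample_moments N K T xd yd)"
  using PLL_stationary_iff_moment_estimator[OF assms(1-4)] assms(5) by blast

lemma isCont_moment_estimators:
  assumes "moment_variance m \<noteq> 0" and "regression_slope m \<noteq> 1"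
  shows "isCont moment_variance m" and "isCont regression_slope m"
    and "isCont phi_of_moments m" and "isCont (sigma2_of_moments N) m"
proof -
  show "isCont moment_variance m"
    unfolding moment_variance_def case_prod_beta by (intro continuous_intros)
  show slope: "isCont regression_slope m"
    using assms(1) unfolding regression_slope_def moment_variance_def case_prod_beta
    by (intro continuous_intros) auto
  show "isCont phi_of_moments m"
    using assms(2) unfolding phi_of_moments_def case_prod_beta
    by (intro continuous_intros slope) auto
  show "isCont (sigma2_of_moments N) m"
  proof (cases "N = 0")
    case False
    then show ?thesis
      using assms(2) unfolding sigma2_of_moments_def by (intro continuous_intros slope) auto
  qed (simp add: sigma2_of_moments_def[abs_def])
qed

lemma eventually_moments_admissible:
  assumes "moments_admissible m"
  shows "\<forall>\<^sub>F m' in nhds m. moments_admissible m'"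
proof -
  have var: "moment_variance m > 0" and slope: "0 < regression_slope m" "regression_slope m < 1"
    using assms unfolding moments_admissible_def by auto
  moreover have "(moment_variance \<longlongrightarrow> moment_variance m) (nhds m)"
    and "(regression_slope \<longlongrightarrow> regression_slope m) (nhds m)"
    using var slope isCont_moment_estimators(1,2)[of m]
    unfolding isCont_def tendsto_at_iff_tendsto_nhds by auto
  ultimately show ?thesis
    unfolding moments_admissible_def by (intro eventually_conj order_tendstoD)
qed

lemma moment_estimators_at_population:
  fixes \<phi> \<sigma>2 :: real
  assumes N: "N \<ge> 1" and \<sigma>2: "\<sigma>2 > 0"
  defines "m0 \<equiv> (\<phi>, \<phi>, \<sigma>2 + \<phi>\<^sup>2 + 1 / real N, \<sigma>2 + \<phi>\<^sup>2)"
  shows "moments_admissible m0" and "phi_of_moments m0 = \<phi>" and "sigma2_of_moments N m0 = \<sigma>2"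
proof -
  have pos: "\<sigma>2 + 1 / real N > 0" using N \<sigma>2 by (simp add: add_pos_pos)
  have d: "1 + \<sigma>2 * real N > 0" using \<sigma>2 by (simp add: add_pos_nonneg)
  have slope: "regression_slope m0 = \<sigma>2 * real N / (1 + \<sigma>2 * real N)"
    unfolding m0_def regression_slope_def using N by (simp add: power2_eq_square field_simps)
  have one_minus: "1 - regression_slope m0 = 1 / (1 + \<sigma>2 * real N)"
    unfolding slope using d by (simp add: field_simps)
  have "moment_variance m0 = \<sigma>2 + 1 / real N"
    unfolding m0_def moment_variance_def by (simp add: power2_eq_square)
  then show "moments_admissible m0"
    unfolding moments_admissible_def slope using pos d \<sigma>2 N by simp
  have "phi_of_moments m0 = (1 - regression_slope m0) * \<phi> / (1 - regression_slope m0)"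
    unfolding phi_of_moments_def by (simp add: m0_def algebra_simps)
  moreover have "1 - regression_slope m0 \<noteq> 0" unfolding one_minus using d by simp
  ultimately show "phi_of_moments m0 = \<phi>" by simp
  show "sigma2_of_moments N m0 = \<sigma>2"
    unfolding sigma2_of_moments_def one_minus unfolding slope using d N by simp
qed

section \<open>Convergence in probability\<close>

definition conv_in_prob :: "'a measure \<Rightarrow> (nat \<Rightarrow> 'a \<Rightarrow> 'b::metric_space) \<Rightarrow> 'b \<Rightarrow> bool" where
  "conv_in_prob M X c \<longleftrightarrow>
     (\<forall>\<epsilon>>0. (\<lambda>T. measure M {\<omega> \<in> space M. dist (X T \<omega>) c > \<epsilon>}) \<longlonglongrightarrow> 0)"

lemma dist_Pair_le: "dist (x, y) (x', y') \<le> dist x x' + dist y y'"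
  unfolding dist_Pair_Pair by (rule order_trans[OF sqrt_sum_squares_le_sum_abs]) simp

lemma (in finite_measure) conv_in_prob_Pair:
  fixes X :: "nat \<Rightarrow> 'a \<Rightarrow> 'b::{metric_space, second_countable_topology}"
    and Y :: "nat \<Rightarrow> 'a \<Rightarrow> 'c::{metric_space, second_countable_topology}"
  assumes X: "conv_in_prob M X a" and Y: "conv_in_prob M Y b"
    and [measurable]: "\<And>T. X T \<in> borel_measurable M" "\<And>T. Y T \<in> borel_measurable M"
  shows "conv_in_prob M (\<lambda>T \<omega>. (X T \<omega>, Y T \<omega>)) (a, b)"
  unfolding conv_in_prob_def
proof (intro allI impI)
  fix \<epsilon> :: real assume "\<epsilon> > 0"
  define Fx where "Fx T = {\<omega> \<in> space M. dist (X T \<omega>) a > \<epsilon> / 2}" for T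
  define Fy where "Fy T = {\<omega> \<in> space M. dist (Y T \<omega>) b > \<epsilon> / 2}" for T
  have [measurable]: "Fx T \<in> sets M" "Fy T \<in> sets M" for T
    unfolding Fx_def Fy_def by measurable
  have "{\<omega> \<in> space M. dist (X T \<omega>, Y T \<omega>) (a, b) > \<epsilon>} \<subseteq> Fx T \<union> Fy T" for T
  proof
    fix \<omega> assume "\<omega> \<in> {\<omega> \<in> space M. dist (X T \<omega>, Y T \<omega>) (a, b) > \<epsilon>}"
    with dist_Pair_le[of "X T \<omega>" "Y T \<omega>" a b] show "\<omega> \<in> Fx T \<union> Fy T"
      unfolding Fx_def Fy_def by auto
  qed
  then have "measure M {\<omega> \<in> space M. dist (X T \<omega>, Y T \<omega>) (a, b) > \<epsilon>} \<le> measure M (Fx T \<union> Fy T)" for T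
    by (intro finite_measure_mono) simp_all
  also have "\<dots> T \<le> measure M (Fx T) + measure M (Fy T)" for T
    by (rule measure_Un_le) simp_all
  finally have le: "measure M {\<omega> \<in> space M. dist (X T \<omega>, Y T \<omega>) (a, b) > \<epsilon>} \<le> measure M (Fx T) + measure M (Fy T)" for T .
  have "\<epsilon> / 2 > 0" using \<open>\<epsilon> > 0\<close> by simp
  have "(\<lambda>T. measure M (Fx T)) \<longlonglongrightarrow> 0" "(\<lambda>T. measure M (Fy T)) \<longlonglongrightarrow> 0"
    unfolding Fx_def Fy_def using \<open>\<epsilon> / 2 > 0\<close>
    by (rule X[unfolded conv_in_prob_def, rule_format], rule Y[unfolded conv_in_prob_def, rule_format])
  then have "(\<lambda>T. measure M (Fx T) + measure M (Fy T)) \<longlonglongrightarrow> 0"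
    using tendsto_add by fastforce
  then show "(\<lambda>T. measure M {\<omega> \<in> space M. dist (X T \<omega>, Y T \<omega>) (a, b) > \<epsilon>}) \<longlonglongrightarrow> 0"
    by (rule Lim_null_comparison[rotated]) (simp add: le)
qed

lemma (in finite_measure) conv_in_prob_continuous_map:
  fixes X :: "nat \<Rightarrow> 'a \<Rightarrow> 'b::{metric_space, second_countable_topology}"
    and Y :: "nat \<Rightarrow> 'a \<Rightarrow> 'c::{metric_space, second_countable_topology}"
  assumes X: "conv_in_prob M X c" and f: "isCont f c" and P: "eventually P (nhds c)"
    and agree: "\<forall>\<^sub>F T in sequentially. \<forall>\<omega>\<in>space M. P (X T \<omega>) \<longrightarrow> Y T \<omega> = f (X T \<omega>)"
    and [measurable]: "\<And>T. X T \<in> borel_measurable M"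
  shows "conv_in_prob M Y (f c)"
  unfolding conv_in_prob_def
proof (intro allI impI)
  fix \<epsilon> :: real assume "\<epsilon> > 0"
  have "\<forall>\<^sub>F m in nhds c. dist (f m) (f c) < \<epsilon>"
    using f \<open>\<epsilon> > 0\<close> unfolding isCont_def tendsto_at_iff_tendsto_nhds by (rule tendstoD)
  with P have "\<forall>\<^sub>F m in nhds c. P m \<and> dist (f m) (f c) < \<epsilon>"
    by (rule eventually_conj)
  then obtain \<delta> where "\<delta> > 0" and \<delta>: "\<forall>m. dist m c < \<delta> \<longrightarrow> P m \<and> dist (f m) (f c) < \<epsilon>"
    unfolding eventually_nhds_metric by auto
  have le: "\<forall>\<^sub>F T in sequentially. measure M {\<omega> \<in> space M. dist (Y T \<omega>) (f c) > \<epsilon>}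
      \<le> measure M {\<omega> \<in> space M. dist (X T \<omega>) c > \<delta> / 2}"
  proof (rule eventually_mono[OF agree], intro finite_measure_mono subsetI)
    fix T \<omega> assume "\<forall>\<omega>\<in>space M. P (X T \<omega>) \<longrightarrow> Y T \<omega> = f (X T \<omega>)"
      and "\<omega> \<in> {\<omega> \<in> space M. dist (Y T \<omega>) (f c) > \<epsilon>}"
    then show "\<omega> \<in> {\<omega> \<in> space M. dist (X T \<omega>) c > \<delta> / 2}"
      using \<delta>[rule_format, of "X T \<omega>"] \<open>\<delta> > 0\<close> by fastforce
  qed measurable
  have lim: "(\<lambda>T. measure M {\<omega> \<in> space M. dist (X T \<omega>) c > \<delta> / 2}) \<longlonglongrightarrow> 0"
    using X[unfolded conv_in_prob_def, rule_format, of "\<delta> / 2"] \<open>\<delta> > 0\<close> by simp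
  from le have "\<forall>\<^sub>F T in sequentially. norm (measure M {\<omega> \<in> space M. dist (Y T \<omega>) (f c) > \<epsilon>})
      \<le> measure M {\<omega> \<in> space M. dist (X T \<omega>) c > \<delta> / 2}"
    by simp
  from this lim show "(\<lambda>T. measure M {\<omega> \<in> space M. dist (Y T \<omega>) (f c) > \<epsilon>}) \<longlonglongrightarrow> 0"
    by (rule Lim_null_comparison)
qed

lemma (in finite_measure) integrable_mult_square_integrable:
  fixes X Y :: "'a \<Rightarrow> real"
  assumes [measurable]: "X \<in> borel_measurable M" "Y \<in> borel_measurable M"
    and "integrable M (\<lambda>\<omega>. (X \<omega>)\<^sup>2)" "integrable M (\<lambda>\<omega>. (Y \<omega>)\<^sup>2)"
  shows "integrable M (\<lambda>\<omega>. X \<omega> * Y \<omega>)"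
proof (rule Bochner_Integration.integrable_bound)
  show "integrable M (\<lambda>\<omega>. (X \<omega>)\<^sup>2 + (Y \<omega>)\<^sup>2)" using assms by simp
  have "\<bar>a * b\<bar> \<le> a\<^sup>2 + b\<^sup>2" for a b :: real
  proof -
    have "2 * (\<bar>a\<bar> * \<bar>b\<bar>) \<le> \<bar>a\<bar>\<^sup>2 + \<bar>b\<bar>\<^sup>2"
      using sum_squares_bound[of "\<bar>a\<bar>" "\<bar>b\<bar>"] by (simp add: mult.assoc)
    moreover have "0 \<le> \<bar>a\<bar> * \<bar>b\<bar>" by simp
    ultimately have "\<bar>a\<bar> * \<bar>b\<bar> \<le> \<bar>a\<bar>\<^sup>2 + \<bar>b\<bar>\<^sup>2" by linarith
    then show ?thesis by (simp add: abs_mult)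
  qed
  then show "AE \<omega> in M. norm (X \<omega> * Y \<omega>) \<le> norm ((X \<omega>)\<^sup>2 + (Y \<omega>)\<^sup>2)"
    by simp
qed measurable

context prob_space
begin

context
  fixes Z :: "nat \<Rightarrow> 'a \<Rightarrow> real" and \<mu> c :: real
  assumes measurable_Z [measurable]: "\<And>t. Z t \<in> borel_measurable M"
    and square_integrable_Z: "\<And>t. integrable M (\<lambda>\<omega>. (Z t \<omega>)\<^sup>2)"
    and expectation_Z: "\<And>t. expectation (Z t) = \<mu>"
    and second_moment_Z_le: "\<And>t. expectation (\<lambda>\<omega>. (Z t \<omega>)\<^sup>2) \<le> c"
    and uncorrelated_Z: "\<And>s t. s \<noteq> t \<Longrightarrow> expectation (\<lambda>\<omega>. Z s \<omega> * Z t \<omega>) = \<mu>\<^sup>2"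
begin

lemma centered_sum_second_moment:
  shows "integrable M (\<lambda>\<omega>. (\<Sum>t<T. Z t \<omega> - \<mu>)\<^sup>2)"
    and "expectation (\<lambda>\<omega>. (\<Sum>t<T. Z t \<omega> - \<mu>)\<^sup>2) \<le> real T * c"
proof -
  have int: "integrable M (Z t)" for t
    using square_integrable_imp_integrable[OF _ square_integrable_Z] by simp
  have int_mult: "integrable M (\<lambda>\<omega>. Z s \<omega> * Z t \<omega>)" for s t
    by (rule integrable_mult_square_integrable) (simp_all add: square_integrable_Z)
  have centered: "(Z s \<omega> - \<mu>) * (Z t \<omega> - \<mu>) = Z s \<omega> * Z t \<omega> - \<mu> * Z s \<omega> - \<mu> * Z t \<omega> + \<mu>\<^sup>2"
    for s t \<omega>
    by (simp add: algebra_simps power2_eq_square)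
  have int_centered: "integrable M (\<lambda>\<omega>. (Z s \<omega> - \<mu>) * (Z t \<omega> - \<mu>))" for s t
    unfolding centered using int_mult int by simp
  have covariance_le: "expectation (\<lambda>\<omega>. (Z s \<omega> - \<mu>) * (Z t \<omega> - \<mu>)) \<le> (if s = t then c else 0)" for s t
  proof -
    have E: "expectation (\<lambda>\<omega>. (Z s \<omega> - \<mu>) * (Z t \<omega> - \<mu>)) = expectation (\<lambda>\<omega>. Z s \<omega> * Z t \<omega>) - \<mu>\<^sup>2"
      unfolding centered using int_mult int expectation_Z by (simp add: prob_space power2_eq_square)
    show ?thesis
    proof (cases "s = t")
      case True
      have "expectation (\<lambda>\<omega>. Z s \<omega> * Z t \<omega>) \<le> c"
        using second_moment_Z_le[of t] True by (simp add: power2_eq_square)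
      with E zero_le_power2[of \<mu>] have "expectation (\<lambda>\<omega>. (Z s \<omega> - \<mu>) * (Z t \<omega> - \<mu>)) \<le> c"
        by linarith
      with True show ?thesis by simp
    qed (simp add: E uncorrelated_Z)
  qed
  have square: "(\<Sum>t<T. Z t \<omega> - \<mu>)\<^sup>2 = (\<Sum>s<T. \<Sum>t<T. (Z s \<omega> - \<mu>) * (Z t \<omega> - \<mu>))" for \<omega>
    by (simp add: power2_eq_square sum_product)
  show "integrable M (\<lambda>\<omega>. (\<Sum>t<T. Z t \<omega> - \<mu>)\<^sup>2)"
    unfolding square using int_centered by simp
  have "expectation (\<lambda>\<omega>. (\<Sum>t<T. Z t \<omega> - \<mu>)\<^sup>2) =
      (\<Sum>s<T. \<Sum>t<T. expectation (\<lambda>\<omega>. (Z s \<omega> - \<mu>) * (Z t \<omega> - \<mu>)))"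
    unfolding square using int_centered by simp
  also have "\<dots> \<le> (\<Sum>s<T. \<Sum>t<T. if s = t then c else 0)"
    by (intro sum_mono covariance_le)
  finally show "expectation (\<lambda>\<omega>. (\<Sum>t<T. Z t \<omega> - \<mu>)\<^sup>2) \<le> real T * c" by simp
qed

lemma Chebyshev_sample_mean:
  assumes "T > 0" and "\<epsilon> > 0"
  shows "measure M {\<omega> \<in> space M. dist (sample_mean T (\<lambda>t. Z t \<omega>)) \<mu> > \<epsilon>} \<le> c / \<epsilon>\<^sup>2 * (1 / real T)"
proof -
  have "{\<omega> \<in> space M. dist (sample_mean T (\<lambda>t. Z t \<omega>)) \<mu> > \<epsilon>}
      \<subseteq> {\<omega> \<in> space M. (\<Sum>t<T. Z t \<omega> - \<mu>)\<^sup>2 \<ge> (real T * \<epsilon>)\<^sup>2}"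
  proof safe
    fix \<omega> assume far: "dist (sample_mean T (\<lambda>t. Z t \<omega>)) \<mu> > \<epsilon>"
    have "(\<Sum>t<T. Z t \<omega> - \<mu>) = real T * (sample_mean T (\<lambda>t. Z t \<omega>) - \<mu>)"
      unfolding sample_mean_def using assms(1) by (simp add: sum_subtractf field_simps)
    then have "\<bar>\<Sum>t<T. Z t \<omega> - \<mu>\<bar> = real T * dist (sample_mean T (\<lambda>t. Z t \<omega>)) \<mu>"
      by (simp add: abs_mult dist_real_def)
    then have "real T * \<epsilon> \<le> \<bar>\<Sum>t<T. Z t \<omega> - \<mu>\<bar>"
      using far assms(1) by simp
    then show "(real T * \<epsilon>)\<^sup>2 \<le> (\<Sum>t<T. Z t \<omega> - \<mu>)\<^sup>2"
      using assms by (metis abs_le_square_iff abs_of_nonneg less_imp_le mult_nonneg_nonneg of_nat_0_le_iff)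
  qed
  then have "measure M {\<omega> \<in> space M. dist (sample_mean T (\<lambda>t. Z t \<omega>)) \<mu> > \<epsilon>}
      \<le> measure M {\<omega> \<in> space M. (\<Sum>t<T. Z t \<omega> - \<mu>)\<^sup>2 \<ge> (real T * \<epsilon>)\<^sup>2}"
    by (intro finite_measure_mono) measurable
  also have "\<dots> \<le> expectation (\<lambda>\<omega>. (\<Sum>t<T. Z t \<omega> - \<mu>)\<^sup>2) / (real T * \<epsilon>)\<^sup>2"
    using assms
    by (intro integral_Markov_inequality_measure[where A = "space M"] centered_sum_second_moment) auto
  also have "\<dots> \<le> real T * c / (real T * \<epsilon>)\<^sup>2"
    using centered_sum_second_moment(2) by (intro divide_right_mono) auto
  also have "\<dots> = c / \<epsilon>\<^sup>2 * (1 / real T)"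
    using assms by (simp add: power2_eq_square)
  finally show ?thesis .
qed

lemma conv_in_prob_sample_mean: "conv_in_prob M (\<lambda>T \<omega>. sample_mean T (\<lambda>t. Z t \<omega>)) \<mu>"
  unfolding conv_in_prob_def
proof (intro allI impI)
  fix \<epsilon> :: real assume "\<epsilon> > 0"
  have "\<forall>\<^sub>F T in sequentially. norm (measure M {\<omega> \<in> space M. dist (sample_mean T (\<lambda>t. Z t \<omega>)) \<mu> > \<epsilon>})
      \<le> c / \<epsilon>\<^sup>2 * (1 / real T)"
    using eventually_gt_at_top[of 0]
  proof eventually_elim
    case (elim T)
    then show ?case using Chebyshev_sample_mean[OF elim \<open>\<epsilon> > 0\<close>] by simp
  qed
  moreover have "(\<lambda>T. c / \<epsilon>\<^sup>2 * (1 / real T)) \<longlonglongrightarrow> 0"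
    by (intro tendsto_mult_right_zero lim_inverse_n')
  ultimately show "(\<lambda>T. measure M {\<omega> \<in> space M. dist (sample_mean T (\<lambda>t. Z t \<omega>)) \<mu> > \<epsilon>}) \<longlonglongrightarrow> 0"
    by (rule Lim_null_comparison)
qed

end

end

section \<open>Moments of independent families\<close>

lemma integrable_normal_density_power:
  assumes "\<sigma> > 0"
  shows "integrable lborel (\<lambda>x. normal_density \<mu> \<sigma> x * x ^ k)"
proof -
  have "normal_density \<mu> \<sigma> x * x ^ k =
      (\<Sum>j\<le>k. of_nat (k choose j) * \<mu> ^ (k - j) * (normal_density \<mu> \<sigma> x * (x - \<mu>) ^ j))" for x
    using binomial_ring[of "x - \<mu>" \<mu> k] by (simp add: sum_distrib_left mult_ac)
  moreover have "integrable lborel (\<lambda>x. \<Sum>j\<le>k. of_nat (k choose j) * \<mu> ^ (k - j) * (normal_density \<mu> \<sigma> x * (x - \<mu>) ^ j))"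
    using integrable_normal_moment[OF assms] by simp
  ultimately show ?thesis by simp
qed

lemma power4_weighted_sum_le:
  fixes \<alpha> p :: "'i \<Rightarrow> real"
  assumes fin: "finite J" and nonneg: "\<And>i. i \<in> J \<Longrightarrow> \<alpha> i \<ge> 0"
  shows "(\<Sum>i\<in>J. \<alpha> i * p i) ^ 4 \<le> (\<Sum>i\<in>J. \<alpha> i) ^ 3 * (\<Sum>i\<in>J. \<alpha> i * p i ^ 4)"
proof (cases "(\<Sum>i\<in>J. \<alpha> i) = 0")
  case True
  then have "\<alpha> i = 0" if "i \<in> J" for i
    using True fin nonneg that by (simp add: sum_nonneg_eq_0_iff)
  then show ?thesis by simp
next
  case False
  define S where "S = (\<Sum>i\<in>J. \<alpha> i)"
  have S: "S > 0" using False nonneg unfolding S_def by (simp add: order_less_le sum_nonneg)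
  have "J \<noteq> {}" using False by auto
  have "(\<Sum>i\<in>J. (\<alpha> i / S) *\<^sub>R p i) ^ 4 \<le> (\<Sum>i\<in>J. \<alpha> i / S * p i ^ 4)"
    using S nonneg \<open>J \<noteq> {}\<close> \<open>finite J\<close>
    by (intro convex_on_sum[OF _ _ convex_power_even[of 4]])
       (auto simp: S_def sum_divide_distrib[symmetric])
  then have Jensen: "((\<Sum>i\<in>J. \<alpha> i * p i) / S) ^ 4 \<le> (\<Sum>i\<in>J. \<alpha> i * p i ^ 4) / S"
    by (simp add: sum_divide_distrib)
  have "(\<Sum>i\<in>J. \<alpha> i * p i) ^ 4 = S ^ 4 * ((\<Sum>i\<in>J. \<alpha> i * p i) / S) ^ 4"
    using S by (simp add: power_divide)
  also have "\<dots> \<le> S ^ 4 * ((\<Sum>i\<in>J. \<alpha> i * p i ^ 4) / S)"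
    using Jensen by (rule mult_left_mono) simp
  also have "\<dots> = S ^ 3 * (\<Sum>i\<in>J. \<alpha> i * p i ^ 4)"
    using S by (simp add: field_simps eval_nat_numeral)
  finally show ?thesis unfolding S_def .
qed

lemma quartic_growth_bounds:
  fixes u v :: real
  shows "u\<^sup>2 \<le> 1 + u ^ 4 + v ^ 4" and "v\<^sup>2 \<le> 1 + u ^ 4 + v ^ 4"
    and "(u\<^sup>2)\<^sup>2 \<le> 1 + u ^ 4 + v ^ 4" and "(u * v)\<^sup>2 \<le> 1 + u ^ 4 + v ^ 4"
proof -
  have quartic: "(w\<^sup>2)\<^sup>2 = w ^ 4" for w :: real by simp
  have square: "2 * w\<^sup>2 \<le> w ^ 4 + 1" for w :: real
    using sum_squares_bound[of "w\<^sup>2" 1] by (simp add: quartic)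
  have product: "2 * (u\<^sup>2 * v\<^sup>2) \<le> u ^ 4 + v ^ 4"
    using sum_squares_bound[of "u\<^sup>2" "v\<^sup>2"] by (simp add: quartic mult.assoc)
  have nonneg: "0 \<le> u ^ 4" "0 \<le> v ^ 4" "0 \<le> u\<^sup>2 * v\<^sup>2"
    by (simp_all add: zero_le_even_power)
  show "u\<^sup>2 \<le> 1 + u ^ 4 + v ^ 4" using square[of u] nonneg zero_le_power2[of u] by linarith
  show "v\<^sup>2 \<le> 1 + u ^ 4 + v ^ 4" using square[of v] nonneg zero_le_power2[of v] by linarith
  show "(u\<^sup>2)\<^sup>2 \<le> 1 + u ^ 4 + v ^ 4" unfolding quartic using nonneg by linarith
  show "(u * v)\<^sup>2 \<le> 1 + u ^ 4 + v ^ 4" unfolding power_mult_distrib using product nonneg by linarith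
qed

lemma (in prob_space) expectation_mult_indep:
  fixes X :: "'i \<Rightarrow> 'a \<Rightarrow> real"
  assumes indep: "indep_vars (\<lambda>_. borel) X I" and ij: "i \<in> I" "j \<in> I" "i \<noteq> j"
    and int: "integrable M (X i)" "integrable M (X j)"
  shows "expectation (\<lambda>\<omega>. X i \<omega> * X j \<omega>) = expectation (X i) * expectation (X j)"
proof -
  have "indep_vars (\<lambda>_. borel) X {i, j}"
    by (rule indep_vars_subset[OF indep]) (use ij in auto)
  then have "expectation (\<lambda>\<omega>. \<Prod>k\<in>{i, j}. X k \<omega>) = (\<Prod>k\<in>{i, j}. expectation (X k))"
    using int by (intro indep_vars_lebesgue_integral) auto
  then show ?thesis using ij by simp
qed

lemma (in prob_space) expectation_mult_indep_vars:
  fixes X :: "'i \<Rightarrow> 'a \<Rightarrow> real"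
  assumes indep: "indep_vars (\<lambda>_. borel) X I" and ij: "i \<in> I" "j \<in> I"
    and sq_int: "integrable M (\<lambda>\<omega>. (X i \<omega>)\<^sup>2)" "integrable M (\<lambda>\<omega>. (X j \<omega>)\<^sup>2)"
  shows "expectation (\<lambda>\<omega>. X i \<omega> * X j \<omega>) =
    expectation (X i) * expectation (X j) + (if i = j then variance (X i) else 0)"
proof -
  have [measurable]: "X i \<in> borel_measurable M" "X j \<in> borel_measurable M"
    using indep ij unfolding indep_vars_def by auto
  have int: "integrable M (X i)" "integrable M (X j)"
    using sq_int by (simp_all add: square_integrable_imp_integrable)
  show ?thesis
  proof (cases "i = j")
    case True
    then show ?thesis using variance_eq[OF int(1) sq_int(1)] by (simp add: power2_eq_square)
  qed (use ij int expectation_mult_indep[OF indep] in auto)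
qed

lemma (in prob_space) expectation_mult_linear_combinations:
  fixes X :: "'i \<Rightarrow> 'a \<Rightarrow> real"
  assumes indep: "indep_vars (\<lambda>_. borel) X I" and J: "finite J" "J \<subseteq> I" and J': "finite J'" "J' \<subseteq> I"
    and sq_int: "\<And>i. i \<in> I \<Longrightarrow> integrable M (\<lambda>\<omega>. (X i \<omega>)\<^sup>2)"
  shows "expectation (\<lambda>\<omega>. (\<Sum>i\<in>J. \<alpha> i * X i \<omega>) * (\<Sum>j\<in>J'. \<beta> j * X j \<omega>)) =
    (\<Sum>i\<in>J. \<alpha> i * expectation (X i)) * (\<Sum>j\<in>J'. \<beta> j * expectation (X j)) +
    (\<Sum>i\<in>J \<inter> J'. \<alpha> i * \<beta> i * variance (X i))"
proof -
  have [measurable]: "X i \<in> borel_measurable M" if "i \<in> I" for i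
    using indep that unfolding indep_vars_def by auto
  have int_mult: "integrable M (\<lambda>\<omega>. X i \<omega> * X j \<omega>)" if "i \<in> I" "j \<in> I" for i j
    using that by (intro integrable_mult_square_integrable sq_int) simp_all
  have "expectation (\<lambda>\<omega>. (\<Sum>i\<in>J. \<alpha> i * X i \<omega>) * (\<Sum>j\<in>J'. \<beta> j * X j \<omega>)) =
      expectation (\<lambda>\<omega>. \<Sum>i\<in>J. \<Sum>j\<in>J'. (\<alpha> i * \<beta> j) * (X i \<omega> * X j \<omega>))"
    by (simp add: sum_product mult_ac)
  also have "\<dots> = (\<Sum>i\<in>J. \<Sum>j\<in>J'. (\<alpha> i * \<beta> j) *
      (expectation (X i) * expectation (X j) + (if i = j then variance (X i) else 0)))"
    using J J' int_mult expectation_mult_indep_vars[OF indep _ _ sq_int sq_int]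
    by (auto simp: subset_eq intro!: sum.cong)
  also have "\<dots> = (\<Sum>i\<in>J. \<alpha> i * expectation (X i)) * (\<Sum>j\<in>J'. \<beta> j * expectation (X j)) +
      (\<Sum>i\<in>J. \<Sum>j\<in>J'. if i = j then \<alpha> i * \<beta> i * variance (X i) else 0)"
  proof -
    have "(\<alpha> i * \<beta> j) * (expectation (X i) * expectation (X j) + (if i = j then variance (X i) else 0)) =
        (\<alpha> i * expectation (X i)) * (\<beta> j * expectation (X j)) +
        (if i = j then \<alpha> i * \<beta> i * variance (X i) else 0)" for i j
      by (simp add: algebra_simps)
    then show ?thesis by (simp add: sum.distrib sum_product)
  qed
  also have "(\<Sum>i\<in>J. \<Sum>j\<in>J'. if i = j then \<alpha> i * \<beta> i * variance (X i) else 0) =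
      (\<Sum>i\<in>J \<inter> J'. \<alpha> i * \<beta> i * variance (X i))"
    using J J' by (simp add: sum.inter_restrict)
  finally show ?thesis .
qed

section \<open>The hierarchical normal model\<close>

locale hierarchical_normal_model = prob_space M for M :: "'a measure" +
  fixes N K :: nat and \<phi>r \<sigma>r2 :: real
    and \<theta> :: "nat \<Rightarrow> 'a \<Rightarrow> real" and ex ey :: "nat \<Rightarrow> nat \<Rightarrow> 'a \<Rightarrow> real"
  assumes N: "N \<ge> 1" and K: "K \<ge> 1" and \<sigma>r2: "\<sigma>r2 > 0"
    and indep: "indep_vars (\<lambda>_. borel) (case_idx \<theta> ex ey) UNIV"
    and dist_theta: "\<And>t. distributed M lborel (\<theta> t) (normal_density \<phi>r (sqrt \<sigma>r2))"
    and dist_ex: "\<And>t n. distributed M lborel (ex t n) (normal_density 0 1)"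
    and dist_ey: "\<And>t k. distributed M lborel (ey t k) (normal_density 0 1)"
begin

abbreviation X :: "idx \<Rightarrow> 'a \<Rightarrow> real" where
  "X \<equiv> case_idx \<theta> ex ey"

definition idx_mean :: "idx \<Rightarrow> real" where
  "idx_mean i = (case i of Th _ \<Rightarrow> \<phi>r | _ \<Rightarrow> 0)"

definition idx_sd :: "idx \<Rightarrow> real" where
  "idx_sd i = (case i of Th _ \<Rightarrow> sqrt \<sigma>r2 | _ \<Rightarrow> 1)"

lemma idx_sd_pos: "idx_sd i > 0"
  using \<sigma>r2 by (cases i) (simp_all add: idx_sd_def)

lemma distributed_X: "distributed M lborel (X i) (normal_density (idx_mean i) (idx_sd i))"
  by (cases i) (simp_all add: idx_mean_def idx_sd_def dist_theta dist_ex dist_ey)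

lemma measurable_X [measurable]: "X i \<in> borel_measurable M"
  using indep unfolding indep_vars_def by auto

lemma measurable_primitives [measurable]:
  "\<theta> t \<in> borel_measurable M" "ex t n \<in> borel_measurable M" "ey t k \<in> borel_measurable M"
  using measurable_X[of "Th t"] measurable_X[of "Ex t n"] measurable_X[of "Ey t k"] by simp_all

lemma integrable_X_power: "integrable M (\<lambda>\<omega>. X i \<omega> ^ k)"
  using distributed_integrable[OF distributed_X, of "\<lambda>x. x ^ k"]
    integrable_normal_density_power[OF idx_sd_pos] by simp

lemma expectation_X: "expectation (X i) = idx_mean i"
  by (rule normal_distributed_expectation[OF idx_sd_pos distributed_X])

lemma variance_X: "expectation (\<lambda>\<omega>. (X i \<omega> - idx_mean i)\<^sup>2) = (idx_sd i)\<^sup>2"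
  using normal_distributed_variance[OF idx_sd_pos distributed_X] by (simp add: expectation_X)

text \<open>Only two laws occur among the primitive variables.\<close>

definition fourth_moment_bound :: real where
  "fourth_moment_bound = max (\<integral>x. normal_density \<phi>r (sqrt \<sigma>r2) x * x ^ 4 \<partial>lborel)
                             (\<integral>x. normal_density 0 1 x * x ^ 4 \<partial>lborel)"

lemma expectation_X_power4_le: "expectation (\<lambda>\<omega>. X i \<omega> ^ 4) \<le> fourth_moment_bound"
proof -
  have "expectation (\<lambda>\<omega>. X i \<omega> ^ 4) = (\<integral>x. normal_density (idx_mean i) (idx_sd i) x * x ^ 4 \<partial>lborel)"
    using distributed_integral[OF distributed_X, of "\<lambda>x. x ^ 4"] by simp
  then show ?thesis
    by (cases i) (simp_all add: fourth_moment_bound_def idx_mean_def idx_sd_def)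
qed

lemma linear_combination_power4:
  assumes J: "finite J" and \<alpha>: "\<And>i. i \<in> J \<Longrightarrow> \<alpha> i \<ge> 0" and sum_\<alpha>: "(\<Sum>i\<in>J. \<alpha> i) = 2"
  shows "integrable M (\<lambda>\<omega>. (\<Sum>i\<in>J. \<alpha> i * X i \<omega>) ^ 4)"
    and "expectation (\<lambda>\<omega>. (\<Sum>i\<in>J. \<alpha> i * X i \<omega>) ^ 4) \<le> 16 * fourth_moment_bound"
proof -
  have le: "(\<Sum>i\<in>J. \<alpha> i * X i \<omega>) ^ 4 \<le> 8 * (\<Sum>i\<in>J. \<alpha> i * X i \<omega> ^ 4)" for \<omega>
    using power4_weighted_sum_le[where \<alpha> = \<alpha> and p = "\<lambda>i. X i \<omega>", OF J \<alpha>] sum_\<alpha> by simp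
  have int_bound: "integrable M (\<lambda>\<omega>. 8 * (\<Sum>i\<in>J. \<alpha> i * X i \<omega> ^ 4))"
    using integrable_X_power by simp
  show int: "integrable M (\<lambda>\<omega>. (\<Sum>i\<in>J. \<alpha> i * X i \<omega>) ^ 4)"
  proof (rule Bochner_Integration.integrable_bound[OF int_bound])
    show "AE \<omega> in M. norm ((\<Sum>i\<in>J. \<alpha> i * X i \<omega>) ^ 4) \<le> norm (8 * (\<Sum>i\<in>J. \<alpha> i * X i \<omega> ^ 4))"
      using le order_trans[OF zero_le_even_power[of 4] le] by (simp add: zero_le_even_power)
  qed measurable
  have "expectation (\<lambda>\<omega>. (\<Sum>i\<in>J. \<alpha> i * X i \<omega>) ^ 4)
      \<le> expectation (\<lambda>\<omega>. 8 * (\<Sum>i\<in>J. \<alpha> i * X i \<omega> ^ 4))"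
    using int int_bound le by (rule integral_mono)
  also have "\<dots> = 8 * (\<Sum>i\<in>J. \<alpha> i * expectation (\<lambda>\<omega>. X i \<omega> ^ 4))"
    using integrable_X_power by simp
  also have "\<dots> \<le> 8 * (\<Sum>i\<in>J. \<alpha> i * fourth_moment_bound)"
    using \<alpha> expectation_X_power4_le by (intro mult_left_mono sum_mono mult_left_mono) auto
  also have "\<dots> = 16 * fourth_moment_bound"
    using sum_\<alpha> by (simp add: sum_distrib_right[symmetric])
  finally show "expectation (\<lambda>\<omega>. (\<Sum>i\<in>J. \<alpha> i * X i \<omega>) ^ 4) \<le> 16 * fourth_moment_bound" .
qed

definition train_idx :: "nat \<Rightarrow> idx set" where
  "train_idx t = insert (Th t) (Ex t ` {..<N})"

definition valid_idx :: "nat \<Rightarrow> idx set" where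
  "valid_idx t = insert (Th t) (Ey t ` {..<K})"

definition weight :: "idx \<Rightarrow> real" where
  "weight i = (case i of Th _ \<Rightarrow> 1 | Ex _ _ \<Rightarrow> 1 / real N | Ey _ _ \<Rightarrow> 1 / real K)"

definition x_bar :: "nat \<Rightarrow> 'a \<Rightarrow> real" where
  "x_bar t \<omega> = (\<Sum>i\<in>train_idx t. weight i * X i \<omega>)"

definition y_bar :: "nat \<Rightarrow> 'a \<Rightarrow> real" where
  "y_bar t \<omega> = (\<Sum>i\<in>valid_idx t. weight i * X i \<omega>)"

lemma finite_train_idx [simp]: "finite (train_idx t)"
  and finite_valid_idx [simp]: "finite (valid_idx t)"
  unfolding train_idx_def valid_idx_def by simp_all

lemma sum_train_idx: "(\<Sum>i\<in>train_idx t. f i) = f (Th t) + (\<Sum>n<N. f (Ex t n))"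
  unfolding train_idx_def by (subst sum.insert) (auto simp: sum.reindex inj_on_def)

lemma sum_valid_idx: "(\<Sum>i\<in>valid_idx t. f i) = f (Th t) + (\<Sum>k<K. f (Ey t k))"
  unfolding valid_idx_def by (subst sum.insert) (auto simp: sum.reindex inj_on_def)

lemma train_inter_valid: "train_idx t \<inter> valid_idx t = {Th t}"
  unfolding train_idx_def valid_idx_def by auto

lemma x_bar_eq_sample_mean: "x_bar t \<omega> = sample_mean N (\<lambda>n. \<theta> t \<omega> + ex t n \<omega>)"
  unfolding x_bar_def sum_train_idx sample_mean_def using N
  by (simp add: weight_def sum.distrib sum_divide_distrib[symmetric] add_divide_distrib)

lemma y_bar_eq_sample_mean: "y_bar t \<omega> = sample_mean K (\<lambda>k. \<theta> t \<omega> + ey t k \<omega>)"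
  unfolding y_bar_def sum_valid_idx sample_mean_def using K
  by (simp add: weight_def sum.distrib sum_divide_distrib[symmetric] add_divide_distrib)

lemma measurable_x_bar [measurable]: "x_bar t \<in> borel_measurable M"
  and measurable_y_bar [measurable]: "y_bar t \<in> borel_measurable M"
  unfolding x_bar_def[abs_def] y_bar_def[abs_def] by measurable

lemma sum_weight_train: "(\<Sum>i\<in>train_idx t. weight i) = 2"
  and sum_weight_valid: "(\<Sum>i\<in>valid_idx t. weight i) = 2"
  using N K by (simp_all add: sum_train_idx sum_valid_idx weight_def)

lemma weight_nonneg: "weight i \<ge> 0"
  by (cases i) (simp_all add: weight_def)

lemma weighted_means: "(\<Sum>i\<in>train_idx t. weight i * idx_mean i) = \<phi>r"
  "(\<Sum>i\<in>valid_idx t. weight i * idx_mean i) = \<phi>r"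
  by (simp_all add: sum_train_idx sum_valid_idx weight_def idx_mean_def)

lemma expectation_linear_combination:
  "finite J \<Longrightarrow> expectation (\<lambda>\<omega>. \<Sum>i\<in>J. \<alpha> i * X i \<omega>) = (\<Sum>i\<in>J. \<alpha> i * idx_mean i)"
  using integrable_X_power[of _ 1] by (simp add: expectation_X)

lemma expectation_x_bar: "expectation (x_bar t) = \<phi>r"
  and expectation_y_bar: "expectation (y_bar t) = \<phi>r"
  unfolding x_bar_def[abs_def] y_bar_def[abs_def]
  by (simp_all add: expectation_linear_combination weighted_means)

lemmas expectation_mult_task_averages =
  expectation_mult_linear_combinations[OF indep _ subset_UNIV _ subset_UNIV integrable_X_power,
    unfolded expectation_X variance_X]

lemma expectation_x_bar_sq: "expectation (\<lambda>\<omega>. (x_bar t \<omega>)\<^sup>2) = \<sigma>r2 + \<phi>r\<^sup>2 + 1 / real N"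
proof -
  have "(\<Sum>i\<in>train_idx t. weight i * weight i * (idx_sd i)\<^sup>2) = \<sigma>r2 + 1 / real N"
    using N \<sigma>r2 by (simp add: sum_train_idx weight_def idx_sd_def)
  then show ?thesis
    using expectation_mult_task_averages[of "train_idx t" "train_idx t" weight weight]
    unfolding x_bar_def power2_eq_square by (simp add: weighted_means)
qed

lemma expectation_x_bar_y_bar: "expectation (\<lambda>\<omega>. x_bar t \<omega> * y_bar t \<omega>) = \<sigma>r2 + \<phi>r\<^sup>2"
proof -
  have "(\<Sum>i\<in>train_idx t \<inter> valid_idx t. weight i * weight i * (idx_sd i)\<^sup>2) = \<sigma>r2"
    using \<sigma>r2 by (simp add: train_inter_valid weight_def idx_sd_def)
  then show ?thesis
    using expectation_mult_task_averages[of "train_idx t" "valid_idx t" weight weight]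
    unfolding x_bar_def y_bar_def by (simp add: weighted_means power2_eq_square)
qed

definition idx_task :: "idx \<Rightarrow> nat" where
  "idx_task i = (case i of Th t \<Rightarrow> t | Ex t _ \<Rightarrow> t | Ey t _ \<Rightarrow> t)"

lemma indep_task_statistics:
  assumes h: "(\<lambda>p. h (fst p) (snd p)) \<in> borel_measurable borel"
  shows "indep_vars (\<lambda>_. borel) (\<lambda>t \<omega>. h (x_bar t \<omega>) (y_bar t \<omega>)) UNIV"
proof -
  define B where "B t = {i. idx_task i = t}" for t
  define H where "H t g = h (\<Sum>i\<in>train_idx t. weight i * g i) (\<Sum>i\<in>valid_idx t. weight i * g i)"
    for t and g :: "idx \<Rightarrow> real"
  have sub: "train_idx t \<subseteq> B t" "valid_idx t \<subseteq> B t" for t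
    unfolding B_def train_idx_def valid_idx_def idx_task_def by auto
  have H_meas: "H t \<in> borel_measurable (PiM (B t) (\<lambda>_. borel))" for t
  proof -
    have lin: "(\<lambda>g. \<Sum>i\<in>J. weight i * g i) \<in> borel_measurable (PiM (B t) (\<lambda>_. borel))" if "J \<subseteq> B t" for J
      using that by (intro borel_measurable_sum borel_measurable_times borel_measurable_const
          measurable_component_singleton) auto
    have "(\<lambda>g. (\<Sum>i\<in>train_idx t. weight i * g i, \<Sum>i\<in>valid_idx t. weight i * g i))
        \<in> borel_measurable (PiM (B t) (\<lambda>_. borel))"
      by (intro borel_measurable_Pair lin sub)
    from measurable_compose[OF this h] show ?thesis unfolding H_def by simp
  qed
  have "indep_vars (\<lambda>_. borel) (\<lambda>t \<omega>. H t (restrict (\<lambda>i. X i \<omega>) (B t))) UNIV"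
    by (rule indep_vars_compose2[OF indep_vars_restrict[OF indep] H_meas])
       (auto simp: B_def disjoint_family_on_def)
  moreover have "H t (restrict (\<lambda>i. X i \<omega>) (B t)) = h (x_bar t \<omega>) (y_bar t \<omega>)" for t \<omega>
    using sub unfolding H_def x_bar_def y_bar_def by (intro arg_cong2[where f = h] sum.cong) auto
  ultimately show ?thesis by simp
qed

lemma conv_in_prob_task_statistic:
  assumes h: "(\<lambda>p. h (fst p) (snd p)) \<in> borel_measurable borel"
    and h_growth: "\<And>u v. (h u v)\<^sup>2 \<le> 1 + u ^ 4 + v ^ 4"
    and h_mean: "\<And>t. expectation (\<lambda>\<omega>. h (x_bar t \<omega>) (y_bar t \<omega>)) = \<mu>"
  shows "conv_in_prob M (\<lambda>T \<omega>. sample_mean T (\<lambda>t. h (x_bar t \<omega>) (y_bar t \<omega>))) \<mu>"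
proof (rule conv_in_prob_sample_mean)
  define Z where "Z t \<omega> = h (x_bar t \<omega>) (y_bar t \<omega>)" for t \<omega>
  show Z_meas: "(\<lambda>\<omega>. h (x_bar t \<omega>) (y_bar t \<omega>)) \<in> borel_measurable M" for t
    using measurable_compose[OF _ h, of "\<lambda>\<omega>. (x_bar t \<omega>, y_bar t \<omega>)"] by simp
  have x4: "integrable M (\<lambda>\<omega>. (x_bar t \<omega>) ^ 4)" "expectation (\<lambda>\<omega>. (x_bar t \<omega>) ^ 4) \<le> 16 * fourth_moment_bound"
    and y4: "integrable M (\<lambda>\<omega>. (y_bar t \<omega>) ^ 4)" "expectation (\<lambda>\<omega>. (y_bar t \<omega>) ^ 4) \<le> 16 * fourth_moment_bound"
    for t
    unfolding x_bar_def y_bar_def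
    using linear_combination_power4[OF finite_train_idx weight_nonneg sum_weight_train]
      linear_combination_power4[OF finite_valid_idx weight_nonneg sum_weight_valid] by auto
  have dominating: "integrable M (\<lambda>\<omega>. 1 + (x_bar t \<omega>) ^ 4 + (y_bar t \<omega>) ^ 4)" for t
    using x4 y4 by simp
  show sq_int: "integrable M (\<lambda>\<omega>. (h (x_bar t \<omega>) (y_bar t \<omega>))\<^sup>2)" for t
    by (rule Bochner_Integration.integrable_bound[OF dominating])
       (use Z_meas h_growth in \<open>auto simp: zero_le_even_power\<close>)
  show "expectation (\<lambda>\<omega>. (h (x_bar t \<omega>) (y_bar t \<omega>))\<^sup>2) \<le> 1 + 32 * fourth_moment_bound" for t
  proof -
    have "expectation (\<lambda>\<omega>. (h (x_bar t \<omega>) (y_bar t \<omega>))\<^sup>2)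
        \<le> expectation (\<lambda>\<omega>. 1 + (x_bar t \<omega>) ^ 4 + (y_bar t \<omega>) ^ 4)"
      using sq_int dominating h_growth by (rule integral_mono)
    also have "\<dots> \<le> 1 + 32 * fourth_moment_bound"
      using x4[of t] y4[of t] by (simp add: prob_space)
    finally show ?thesis .
  qed
  show "expectation (\<lambda>\<omega>. h (x_bar t \<omega>) (y_bar t \<omega>)) = \<mu>" for t by (rule h_mean)
  show "expectation (\<lambda>\<omega>. h (x_bar s \<omega>) (y_bar s \<omega>) * h (x_bar t \<omega>) (y_bar t \<omega>)) = \<mu>\<^sup>2"
    if "s \<noteq> t" for s t
    using expectation_mult_indep[OF indep_task_statistics[OF h], of s t] that h_mean
      square_integrable_imp_integrable[OF Z_meas sq_int]
    by (simp add: power2_eq_square)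
qed

lemma conv_in_prob_sample_moments:
  "conv_in_prob M (\<lambda>T \<omega>. sample_moments N K T (\<lambda>t n. \<theta> t \<omega> + ex t n \<omega>) (\<lambda>t k. \<theta> t \<omega> + ey t k \<omega>))
     (\<phi>r, \<phi>r, \<sigma>r2 + \<phi>r\<^sup>2 + 1 / real N, \<sigma>r2 + \<phi>r\<^sup>2)"
proof -
  have moments: "sample_moments N K T (\<lambda>t n. \<theta> t \<omega> + ex t n \<omega>) (\<lambda>t k. \<theta> t \<omega> + ey t k \<omega>) =
      (sample_mean T (\<lambda>t. x_bar t \<omega>), sample_mean T (\<lambda>t. y_bar t \<omega>),
       sample_mean T (\<lambda>t. (x_bar t \<omega>)\<^sup>2), sample_mean T (\<lambda>t. x_bar t \<omega> * y_bar t \<omega>))" for T \<omega>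
    unfolding sample_moments_def Let_def x_bar_eq_sample_mean y_bar_eq_sample_mean ..
  have [measurable]: "(\<lambda>\<omega>. sample_mean T (\<lambda>t. f t \<omega>)) \<in> borel_measurable M"
    if [measurable]: "\<And>t. f t \<in> borel_measurable M" for f :: "nat \<Rightarrow> 'a \<Rightarrow> real" and T
    unfolding sample_mean_def by measurable
  have "conv_in_prob M (\<lambda>T \<omega>. sample_mean T (\<lambda>t. x_bar t \<omega>)) \<phi>r"
    by (rule conv_in_prob_task_statistic[where h = "\<lambda>u v. u"])
       (intro borel_measurable_continuous_onI continuous_intros, simp_all add: quartic_growth_bounds expectation_x_bar)
  moreover have "conv_in_prob M (\<lambda>T \<omega>. sample_mean T (\<lambda>t. y_bar t \<omega>)) \<phi>r"
    by (rule conv_in_prob_task_statistic[where h = "\<lambda>u v. v"])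
       (intro borel_measurable_continuous_onI continuous_intros, simp_all add: quartic_growth_bounds expectation_y_bar)
  moreover have "conv_in_prob M (\<lambda>T \<omega>. sample_mean T (\<lambda>t. (x_bar t \<omega>)\<^sup>2)) (\<sigma>r2 + \<phi>r\<^sup>2 + 1 / real N)"
    by (rule conv_in_prob_task_statistic[where h = "\<lambda>u v. u\<^sup>2"])
       (intro borel_measurable_continuous_onI continuous_intros, simp_all add: quartic_growth_bounds expectation_x_bar_sq)
  moreover have "conv_in_prob M (\<lambda>T \<omega>. sample_mean T (\<lambda>t. x_bar t \<omega> * y_bar t \<omega>)) (\<sigma>r2 + \<phi>r\<^sup>2)"
    by (rule conv_in_prob_task_statistic[where h = "\<lambda>u v. u * v"])
       (intro borel_measurable_continuous_onI continuous_intros, simp_all add: quartic_growth_bounds expectation_x_bar_y_bar)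
  ultimately show ?thesis
    unfolding moments by (intro conv_in_prob_Pair) measurable
qed

lemma conv_in_prob_stationary_points:
  fixes \<phi>hat \<sigma>hat2 :: "nat \<Rightarrow> 'a \<Rightarrow> real"
  assumes stationary: "\<And>T \<omega>. \<omega> \<in> space M \<Longrightarrow>
      (\<exists>\<phi> s. PLL_stationary N K T (\<lambda>t n. \<theta> t \<omega> + ex t n \<omega>) (\<lambda>t k. \<theta> t \<omega> + ey t k \<omega>) \<phi> s) \<Longrightarrow>
      PLL_stationary N K T (\<lambda>t n. \<theta> t \<omega> + ex t n \<omega>) (\<lambda>t k. \<theta> t \<omega> + ey t k \<omega>) (\<phi>hat T \<omega>) (\<sigma>hat2 T \<omega>)"
  shows "conv_in_prob M \<phi>hat \<phi>r" and "conv_in_prob M \<sigma>hat2 \<sigma>r2"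
proof -
  define m where "m T \<omega> = sample_moments N K T (\<lambda>t n. \<theta> t \<omega> + ex t n \<omega>) (\<lambda>t k. \<theta> t \<omega> + ey t k \<omega>)"
    for T \<omega>
  define m0 where "m0 = (\<phi>r, \<phi>r, \<sigma>r2 + \<phi>r\<^sup>2 + 1 / real N, \<sigma>r2 + \<phi>r\<^sup>2)"
  note population = moment_estimators_at_population[OF N \<sigma>r2, of \<phi>r, folded m0_def]
  have conv: "conv_in_prob M m m0"
    unfolding m_def m0_def by (rule conv_in_prob_sample_moments)
  have m_meas: "m T \<in> borel_measurable M" for T
    unfolding m_def sample_moments_def Let_def sample_mean_def by measurable
  have cont: "isCont phi_of_moments m0" "isCont (sigma2_of_moments N) m0"
    using population(1) unfolding moments_admissible_def by (auto intro: isCont_moment_estimators)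
  have near: "\<forall>\<^sub>F p in nhds m0. moments_admissible p"
    by (rule eventually_moments_admissible[OF population(1)])
  have agree: "\<forall>\<^sub>F T in sequentially. \<forall>\<omega>\<in>space M. moments_admissible (m T \<omega>) \<longrightarrow>
      \<phi>hat T \<omega> = phi_of_moments (m T \<omega>) \<and> \<sigma>hat2 T \<omega> = sigma2_of_moments N (m T \<omega>)"
  proof -
    have estimators: "\<phi>hat T \<omega> = phi_of_moments (m T \<omega>) \<and> \<sigma>hat2 T \<omega> = sigma2_of_moments N (m T \<omega>)"
      if "T > 0" "\<omega> \<in> space M" "moments_admissible (m T \<omega>)" for T \<omega>
      using stationary_point_eq_moment_estimator[OF N K that(1) _ stationary[OF that(2)]] that(3)
      unfolding m_def by blast
    show ?thesis
      by (rule eventually_mono[OF eventually_gt_at_top[of 0]]) (simp add: estimators)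
  qed
  have "conv_in_prob M \<phi>hat (phi_of_moments m0)"
    using agree by (intro conv_in_prob_continuous_map[OF conv cont(1) near _ m_meas]) (auto elim: eventually_mono)
  moreover have "conv_in_prob M \<sigma>hat2 (sigma2_of_moments N m0)"
    using agree by (intro conv_in_prob_continuous_map[OF conv cont(2) near _ m_meas]) (auto elim: eventually_mono)
  ultimately show "conv_in_prob M \<phi>hat \<phi>r" and "conv_in_prob M \<sigma>hat2 \<sigma>r2"
    unfolding population(2,3) .
qed

end

theorem proposition1:
  fixes M :: "'a measure"
    and N K :: nat
    and \<phi>r \<sigma>r2 :: real
    and \<theta> :: "nat \<Rightarrow> 'a \<Rightarrow> real"
    and ex ey :: "nat \<Rightarrow> nat \<Rightarrow> 'a \<Rightarrow> real"
    and x y :: "nat \<Rightarrow> nat \<Rightarrow> 'a \<Rightarrow> real"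
    and \<phi>hat \<sigma>hat2 :: "nat \<Rightarrow> 'a \<Rightarrow> real"
  assumes "prob_space M"
    and "N \<ge> 1" and "K \<ge> 1" and "\<sigma>r2 > 0"
    and indep: "prob_space.indep_vars M (\<lambda>_. borel) (case_idx \<theta> ex ey) UNIV"
    and dist_theta: "\<And>t. distributed M lborel (\<theta> t) (normal_density \<phi>r (sqrt \<sigma>r2))"
    and dist_ex: "\<And>t n. distributed M lborel (ex t n) (normal_density 0 1)"
    and dist_ey: "\<And>t k. distributed M lborel (ey t k) (normal_density 0 1)"
    and x_def: "\<And>t n \<omega>. \<omega> \<in> space M \<Longrightarrow> x t n \<omega> = \<theta> t \<omega> + ex t n \<omega>"
    and y_def: "\<And>t k \<omega>. \<omega> \<in> space M \<Longrightarrow> y t k \<omega> = \<theta> t \<omega> + ey t k \<omega>"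
    and meas_phi: "\<And>T. \<phi>hat T \<in> borel_measurable M"
    and meas_sigma: "\<And>T. \<sigma>hat2 T \<in> borel_measurable M"
    and solves: "\<And>T \<omega>. \<omega> \<in> space M \<Longrightarrow>
        (\<exists>\<phi> s. PLL_stationary N K T (\<lambda>t n. x t n \<omega>) (\<lambda>t k. y t k \<omega>) \<phi> s) \<Longrightarrow>
        PLL_stationary N K T (\<lambda>t n. x t n \<omega>) (\<lambda>t k. y t k \<omega>) (\<phi>hat T \<omega>) (\<sigma>hat2 T \<omega>)"
  shows "\<forall>\<epsilon>>0.
      (\<lambda>T. measure M {\<omega> \<in> space M. \<bar>\<phi>hat T \<omega> - \<phi>r\<bar> > \<epsilon>}) \<longlonglongrightarrow> 0 \<and>
      (\<lambda>T. measure M {\<omega> \<in> space M. \<bar>\<sigma>hat2 T \<omega> - \<sigma>r2\<bar> > \<epsilon>}) \<longlonglongrightarrow> 0"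
proof -
  interpret hierarchical_normal_model M N K \<phi>r \<sigma>r2 \<theta> ex ey
    using assms unfolding hierarchical_normal_model_def hierarchical_normal_model_axioms_def by blast
  have data: "(\<lambda>t n. x t n \<omega>) = (\<lambda>t n. \<theta> t \<omega> + ex t n \<omega>)"
      "(\<lambda>t k. y t k \<omega>) = (\<lambda>t k. \<theta> t \<omega> + ey t k \<omega>)"
    if "\<omega> \<in> space M" for \<omega>
    using that x_def y_def by auto
  have "PLL_stationary N K T (\<lambda>t n. \<theta> t \<omega> + ex t n \<omega>) (\<lambda>t k. \<theta> t \<omega> + ey t k \<omega>) (\<phi>hat T \<omega>) (\<sigma>hat2 T \<omega>)"
    if "\<omega> \<in> space M"
      and "\<exists>\<phi> s. PLL_stationary N K T (\<lambda>t n. \<theta> t \<omega> + ex t n \<omega>) (\<lambda>t k. \<theta> t \<omega> + ey t k \<omega>) \<phi> s"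
    for T \<omega>
    using solves[OF that(1)] that(2) unfolding data[OF that(1)] .
  from conv_in_prob_stationary_points[OF this] show ?thesis
    unfolding conv_in_prob_def dist_real_def by blast
qed

end
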